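(* Let $\mathfrak{g}$ be a direct product of finitely many Lie algebras of the form $\operatorname{Lie}(\operatorname{Isom}M)$ with $M = S^k$, $\mathbb{E}^k$, or $\mathbb{H}^k$ (the $k$ and the type of $M$ may vary between factors). Then $\mathfrak{g}$ contains no nonabelian nilpotent subalgebra.
   Context: $\operatorname{Lie}(\operatorname{Isom}M)$ is the Lie algebra of the isometry group of $M$: $\mathfrak{so}_{k+1}$ for $S^k$, $\mathbb{R}^k\rtimes\mathfrak{so}_k$ for $\mathbb{E}^k$, and $\mathfrak{so}_{1,k}$ for $\mathbb{H}^k$. *)

theory Defs
  imports "Jordan_Normal_Form.Matrix"
begin

text \<open>Model geometries: S^k, E^k, H^k.  Each Lie(Isom M) is realised by its standard
faithful representation as a Lie algebra of real (k+1)x(k+1) matrices with the commutator bracket.\<close>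

datatype geom = Sph | Euc | Hyp

definition lorentz_J :: "nat \<Rightarrow> real mat" where
  "lorentz_J n = mat n n (\<lambda>(i,j). if i = j then (if i = 0 then -1 else 1) else 0)"

text \<open>so_{k+1}; R^k semidirect so_k (affine matrices [[A,v],[0,0]] with A skew);
so_{1,k} (matrices X with X^T J + J X = 0, J = diag(-1,1,...,1)).\<close>
fun lie_isom :: "geom \<Rightarrow> nat \<Rightarrow> real mat set" where
  "lie_isom Sph k = {A \<in> carrier_mat (k+1) (k+1). transpose_mat A = - A}"
| "lie_isom Euc k = {A \<in> carrier_mat (k+1) (k+1).
      (\<forall>j<k+1. A $$ (k, j) = 0) \<and> (\<forall>i<k. \<forall>j<k. A $$ (j, i) = - A $$ (i, j))}"
| "lie_isom Hyp k = {A \<in> carrier_mat (k+1) (k+1).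
      transpose_mat A * lorentz_J (k+1) + lorentz_J (k+1) * A = 0\<^sub>m (k+1) (k+1)}"

text \<open>Direct product of the factors fs (list of (geometry, k)): elements are lists of
matrices, one per factor, with componentwise operations.\<close>
definition prod_carrier :: "(geom \<times> nat) list \<Rightarrow> real mat list set" where
  "prod_carrier fs = {xs. length xs = length fs \<and>
      (\<forall>i<length fs. xs ! i \<in> lie_isom (fst (fs ! i)) (snd (fs ! i)))}"

definition pzero :: "(geom \<times> nat) list \<Rightarrow> real mat list" where
  "pzero fs = map (\<lambda>(g,k). 0\<^sub>m (k+1) (k+1)) fs"

definition padd :: "real mat list \<Rightarrow> real mat list \<Rightarrow> real mat list" where
  "padd xs ys = map2 (+) xs ys"

definition psmult :: "real \<Rightarrow> real mat list \<Rightarrow> real mat list" where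
  "psmult c xs = map (\<lambda>A. c \<cdot>\<^sub>m A) xs"

definition pbr :: "real mat list \<Rightarrow> real mat list \<Rightarrow> real mat list" where
  "pbr xs ys = map2 (\<lambda>A B. A * B - B * A) xs ys"

definition is_subalgebra :: "(geom \<times> nat) list \<Rightarrow> real mat list set \<Rightarrow> bool" where
  "is_subalgebra fs S \<longleftrightarrow> S \<subseteq> prod_carrier fs \<and> pzero fs \<in> S \<and>
     (\<forall>x\<in>S. \<forall>y\<in>S. padd x y \<in> S) \<and> (\<forall>c. \<forall>x\<in>S. psmult c x \<in> S) \<and>
     (\<forall>x\<in>S. \<forall>y\<in>S. pbr x y \<in> S)"

inductive_set pspan :: "(geom \<times> nat) list \<Rightarrow> real mat list set \<Rightarrow> real mat list set"
  for fs G where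
  zero: "pzero fs \<in> pspan fs G"
| gen: "x \<in> G \<Longrightarrow> x \<in> pspan fs G"
| add: "x \<in> pspan fs G \<Longrightarrow> y \<in> pspan fs G \<Longrightarrow> padd x y \<in> pspan fs G"
| smult: "x \<in> pspan fs G \<Longrightarrow> psmult c x \<in> pspan fs G"

fun lcs :: "(geom \<times> nat) list \<Rightarrow> real mat list set \<Rightarrow> nat \<Rightarrow> real mat list set" where
  "lcs fs S 0 = S"
| "lcs fs S (Suc n) = pspan fs {pbr x y | x y. x \<in> S \<and> y \<in> lcs fs S n}"

definition is_nilpotent :: "(geom \<times> nat) list \<Rightarrow> real mat list set \<Rightarrow> bool" where
  "is_nilpotent fs S \<longleftrightarrow> (\<exists>n. lcs fs S n = {pzero fs})"

definition is_abelian :: "(geom \<times> nat) list \<Rightarrow> real mat list set \<Rightarrow> bool" where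
  "is_abelian fs S \<longleftrightarrow> (\<forall>x\<in>S. \<forall>y\<in>S. pbr x y = pzero fs)"

end

theory Submission
  imports Defs "Jordan_Normal_Form.Jordan_Normal_Form_Existence"
begin

text \<open>
  In a nilpotent, nonabelian Lie algebra the last nonzero term of the lower central series
  contains a bracket \<open>z = [x, y] \<noteq> 0\<close> commuting with \<open>x\<close> and \<open>y\<close>.  Some component of \<open>z\<close> is
  nonzero, so it suffices to show that in each factor such a Heisenberg triple has \<open>z = 0\<close>.

  Since \<open>x\<close> commutes with \<open>z\<close>, \<open>tr (z w) = tr ([x, y] w) = 0\<close> for every \<open>w\<close> commuting with \<open>x\<close>,
  in particular for all powers of \<open>z\<close>.  In \<open>so(k+1)\<close>, \<open>tr (z\<^sup>2) = -|z|\<^sup>2\<close> forces \<open>z = 0\<close>.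
  In the Euclidean algebra this kills the rotation part of \<open>z\<close>, and its translation part
  \<open>w\<close> is killed by both rotation parts of \<open>x\<close>, \<open>y\<close>, whence \<open>|w|\<^sup>2 = 0\<close>.  In \<open>so(1,k)\<close>, \<open>z\<close> is
  nilpotent; the image of its top nonzero power is totally isotropic, hence a null line
  \<open>\<real> n\<^sub>0\<close>.  A look at the Lorentz form shows \<open>z\<^sup>2 v = c \<langle>v, n\<^sub>0\<rangle> n\<^sub>0\<close> with \<open>c \<noteq> 0\<close>; then \<open>x\<close>, \<open>y\<close>
  kill \<open>n\<^sub>0\<close>, and for \<open>\<langle>u, n\<^sub>0\<rangle> = 1\<close> the vector \<open>z u = [x, y] u\<close> is isotropic yet has norm \<open>-c\<close>.
\<close>

section \<open>Traces\<close>

definition mat_trace :: "'a::comm_ring_1 mat \<Rightarrow> 'a" where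
  "mat_trace A = (\<Sum>i<dim_row A. A $$ (i,i))"

lemma index_mult_mat_sum:
  assumes "A \<in> carrier_mat n m" "B \<in> carrier_mat m k" "i < n" "j < k"
  shows "(A * B) $$ (i,j) = (\<Sum>l<m. A $$ (i,l) * B $$ (l,j))"
  using assms by (auto simp: scalar_prod_def atLeast0LessThan intro!: sum.cong)

lemma mat_trace_mult:
  assumes "A \<in> carrier_mat n m" "B \<in> carrier_mat m n"
  shows "mat_trace (A * B) = (\<Sum>i<n. \<Sum>j<m. A $$ (i,j) * B $$ (j,i))"
  using assms unfolding mat_trace_def
  by (auto simp: scalar_prod_def atLeast0LessThan intro!: sum.cong)

lemma mat_trace_mult_comm:
  assumes "A \<in> carrier_mat n m" "B \<in> carrier_mat m n"
  shows "mat_trace (A * B) = mat_trace (B * A)"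
  unfolding mat_trace_mult[OF assms] mat_trace_mult[OF assms(2,1)]
  by (subst sum.swap) (simp add: mult.commute)

lemma mat_trace_minus:
  assumes "A \<in> carrier_mat n n" "B \<in> carrier_mat n n"
  shows "mat_trace (A - B) = mat_trace A - mat_trace B"
  using assms unfolding mat_trace_def by (auto simp: sum_subtractf)

lemma mat_trace_eq_sum_list_diag: "mat_trace A = sum_list (diag_mat A)"
  unfolding mat_trace_def diag_mat_def
  by (simp add: lessThan_atLeast0 sum_list_distinct_conv_sum_set)

lemma mat_trace_commutator_mult:
  fixes X Y W :: "'a::comm_ring_1 mat"
  assumes X: "X \<in> carrier_mat n n" and Y: "Y \<in> carrier_mat n n" and W: "W \<in> carrier_mat n n"
    and XW: "X * W = W * X"
  shows "mat_trace ((X * Y - Y * X) * W) = 0"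
proof -
  have XY: "X * Y \<in> carrier_mat n n" "Y * X \<in> carrier_mat n n" using X Y by auto
  have "(X * Y - Y * X) * W = X * Y * W - Y * X * W"
    using XY W by (simp add: minus_mult_distrib_mat[of _ n n])
  then have "mat_trace ((X * Y - Y * X) * W) = mat_trace (X * Y * W) - mat_trace (Y * X * W)"
    using mat_trace_minus[of "X * Y * W" n "Y * X * W"] XY W by simp
  also have "Y * X * W = (Y * W) * X" using X Y W XW by (simp add: assoc_mult_mat[of _ n n _ n _ n])
  also have "mat_trace ((Y * W) * X) = mat_trace (X * (Y * W))"
    using X Y W by (intro mat_trace_mult_comm[of _ n n]) auto
  also have "X * (Y * W) = X * Y * W" using X Y W by (simp add: assoc_mult_mat[of _ n n _ n _ n])
  finally show ?thesis by simp
qed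

lemma mat_trace_similar_pow:
  assumes "similar_mat_wit A B P Q" "A \<in> carrier_mat n n"
  shows "mat_trace (A ^\<^sub>m k) = mat_trace (B ^\<^sub>m k)"
proof -
  note PQ = similar_mat_witD[OF carrier_matD(1)[OF assms(2), symmetric] assms(1)]
  have Bk: "B ^\<^sub>m k \<in> carrier_mat n n" using PQ(5) by auto
  have "mat_trace (A ^\<^sub>m k) = mat_trace ((P * B ^\<^sub>m k) * Q)"
    by (simp add: similar_mat_wit_pow_id[OF assms(1)])
  also have "\<dots> = mat_trace (Q * (P * B ^\<^sub>m k))"
    using PQ Bk by (intro mat_trace_mult_comm[of _ n n]) auto
  also have "Q * (P * B ^\<^sub>m k) = (Q * P) * B ^\<^sub>m k"
    using PQ Bk by (metis assoc_mult_mat)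
  also have "\<dots> = B ^\<^sub>m k" unfolding PQ(2) using Bk by (rule left_mult_one_mat)
  finally show ?thesis .
qed

section \<open>Matrices whose powers have trace zero are nilpotent\<close>

lemma sum_list_weighted_sum_swap:
  fixes xs :: "(nat \<times> 'a::comm_ring_1) list" and c :: "nat \<Rightarrow> 'a"
  shows "(\<Sum>(m,a)\<leftarrow>xs. of_nat m * (\<Sum>j\<in>J. c j * a^j)) = (\<Sum>j\<in>J. c j * (\<Sum>(m,a)\<leftarrow>xs. of_nat m * a^j))"
  by (induction xs) (auto simp: sum.distrib sum_distrib_left algebra_simps)

text \<open>Evaluate \<open>\<Sum> m\<^sub>i p(a\<^sub>i)\<close> for a polynomial \<open>p\<close> without constant term that vanishes at every
  \<open>a\<^sub>i\<close> except one nonzero \<open>t\<^sub>0\<close>: the power sums make it zero, the choice of \<open>p\<close> makes it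
  a positive multiple of \<open>p(t\<^sub>0) \<noteq> 0\<close>.\<close>
lemma weighted_power_sums_zero_imp_zero:
  fixes xs :: "(nat \<times> complex) list"
  assumes pos: "\<forall>(m,a)\<in>set xs. m > 0" and ps: "\<forall>k\<ge>1. (\<Sum>(m,a)\<leftarrow>xs. of_nat m * a^k) = 0"
  shows "\<forall>(m,a)\<in>set xs. a = 0"
proof (rule ccontr)
  assume "\<not> ?thesis"
  then obtain m0 t0 where mt: "(m0,t0) \<in> set xs" and t0: "t0 \<noteq> 0" by auto
  define T where "T = snd ` set xs - {0, t0}"
  define p :: "complex poly" where "p = [:0,1:] * (\<Prod>s\<in>T. [:-s,1:])"
  have fT: "finite T" unfolding T_def by auto
  have c0: "coeff p 0 = 0" unfolding p_def by (simp add: coeff_mult)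
  have poly_p: "poly p a = (\<Sum>j\<in>{1..degree p}. coeff p j * a^j)" for a
  proof -
    have "poly p a = (\<Sum>j\<le>degree p. coeff p j * a^j)" by (simp add: poly_altdef)
    also have "\<dots> = (\<Sum>j\<in>insert 0 {1..degree p}. coeff p j * a^j)"
      by (rule sum.cong) auto
    also have "\<dots> = (\<Sum>j\<in>{1..degree p}. coeff p j * a^j)" using c0 by simp
    finally show ?thesis .
  qed
  have "(\<Sum>(m,a)\<leftarrow>xs. of_nat m * poly p a)
      = (\<Sum>j\<in>{1..degree p}. coeff p j * (\<Sum>(m,a)\<leftarrow>xs. of_nat m * a^j))"
    unfolding poly_p by (rule sum_list_weighted_sum_swap)
  also have "\<dots> = 0" using ps by (intro sum.neutral) auto
  finally have sum_zero: "(\<Sum>(m,a)\<leftarrow>xs. of_nat m * poly p a) = 0" .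
  have p_vanishes: "poly p a = (if a = t0 then poly p t0 else 0)" if "a \<in> snd ` set xs" for a
  proof (cases "a = t0 \<or> a = 0")
    case False
    with that have "a \<in> T" unfolding T_def by auto
    then show ?thesis using False fT by (simp add: p_def poly_prod prod_zero_iff)
  qed (auto simp: p_def)
  have pt0: "poly p t0 \<noteq> 0"
    using fT t0 unfolding p_def by (auto simp: poly_prod prod_zero_iff T_def)
  have "(\<Sum>(m,a)\<leftarrow>xs. of_nat m * poly p a)
      = (\<Sum>(m,a)\<leftarrow>xs. of_nat m * (if a = t0 then poly p t0 else 0))"
    by (rule arg_cong[of _ _ sum_list], rule map_cong, simp, use p_vanishes in force)
  also have "\<dots> = of_nat (\<Sum>(m,a)\<leftarrow>xs. if a = t0 then m else 0) * poly p t0"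
    by (induction xs) (auto simp: algebra_simps)
  finally have count_zero: "(\<Sum>(m,a)\<leftarrow>xs. if a = t0 then m else 0) = 0"
    using sum_zero pt0 by simp
  have "m0 \<le> (\<Sum>(m,a)\<leftarrow>xs. if a = t0 then m else 0)"
    using member_le_sum_list[of "(\<lambda>(m,a). if a = t0 then m else 0) (m0,t0)"
        "map (\<lambda>(m,a). if a = t0 then m else 0) xs"] mt
    by force
  then have "m0 = 0" unfolding count_zero by simp
  then show False using mt pos by auto
qed

lemma diag_mat_diag_block_mat:
  assumes "\<forall>B\<in>set Bs. B \<in> carrier_mat (dim_row B) (dim_row B)"
  shows "diag_mat (diag_block_mat Bs) = concat (map diag_mat Bs)"
  using assms
proof (induction Bs)
  case Nil then show ?case by (simp add: diag_mat_def)
next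
  case (Cons A As)
  let ?B = "diag_block_mat As"
  have "dim_col ?B = dim_row ?B" unfolding dim_diag_block_mat using Cons.prems
    by (metis (mono_tags, lifting) carrier_matD(2) list.set_intros(2) map_eq_conv)
  then have B: "?B \<in> carrier_mat (dim_row ?B) (dim_row ?B)" by auto
  have A: "A \<in> carrier_mat (dim_row A) (dim_row A)" using Cons.prems by auto
  have "diag_mat (diag_block_mat (A # As)) = diag_mat A @ diag_mat ?B"
    by (simp add: Let_def diag_four_block_mat[OF A B])
  then show ?case using Cons by simp
qed

lemma diag_block_mat_zero:
  assumes "\<forall>B\<in>set Bs. B = 0\<^sub>m (dim_row B) (dim_row B)"
  shows "diag_block_mat Bs = 0\<^sub>m (sum_list (map dim_row Bs)) (sum_list (map dim_row Bs))"
  using assms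
proof (induction Bs)
  case Nil then show ?case by simp
next
  case (Cons A As)
  have A: "A = 0\<^sub>m (dim_row A) (dim_row A)" using Cons.prems by auto
  have IH: "diag_block_mat As = 0\<^sub>m (sum_list (map dim_row As)) (sum_list (map dim_row As))"
    using Cons by auto
  show ?case
    apply (simp add: Let_def IH)
    apply (subst A)
    apply (subst four_block_zero_mat[symmetric])
    using A by (metis index_zero_mat(2) index_zero_mat(3))
qed

lemma mat_trace_jordan_matrix_pow:
  fixes n_as :: "(nat \<times> 'a::field) list"
  shows "mat_trace (jordan_matrix n_as ^\<^sub>m k) = (\<Sum>(m,a)\<leftarrow>n_as. of_nat m * a^k)"
proof -
  have "diag_mat (jordan_matrix n_as ^\<^sub>m k)
      = concat (map diag_mat (map (\<lambda>(m,a). jordan_block m a ^\<^sub>m k) n_as))"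
    unfolding jordan_matrix_pow by (subst diag_mat_diag_block_mat) auto
  also have "\<dots> = concat (map (\<lambda>(m,a). replicate m (a^k)) n_as)"
    by (auto simp: diag_jordan_block_pow intro!: arg_cong[of _ _ concat])
  finally have "mat_trace (jordan_matrix n_as ^\<^sub>m k)
      = sum_list (concat (map (\<lambda>(m,a). replicate m (a^k)) n_as))"
    by (simp add: mat_trace_eq_sum_list_diag)
  also have "\<dots> = (\<Sum>(m,a)\<leftarrow>n_as. of_nat m * a^k)"
    by (induction n_as) (auto simp: sum_list_replicate)
  finally show ?thesis .
qed

lemma jordan_matrix_nilpotent:
  fixes n_as :: "(nat \<times> 'a::field) list"
  assumes "\<forall>(m,a)\<in>set n_as. a = 0" and n: "n = sum_list (map fst n_as)"
  shows "jordan_matrix n_as ^\<^sub>m n = 0\<^sub>m n n"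
proof -
  let ?Bs = "map (\<lambda>(m,a). jordan_block m a ^\<^sub>m n) n_as"
  have "B = 0\<^sub>m (dim_row B) (dim_row B)" if "B \<in> set ?Bs" for B
  proof -
    from that obtain m a where ma: "(m,a) \<in> set n_as" "B = jordan_block m a ^\<^sub>m n" by auto
    have "m \<in> set (map fst n_as)" using ma(1) by force
    then have "m \<le> n" using member_le_sum_list[of m "map fst n_as"] unfolding n by simp
    then have "jordan_block m (0::'a) ^\<^sub>m n = 0\<^sub>m m m"
      unfolding jordan_block_zero_pow by (intro eq_matI) auto
    then show ?thesis using ma assms(1) by auto
  qed
  moreover have "map dim_row ?Bs = map fst n_as" by (induction n_as) auto
  ultimately show ?thesis unfolding jordan_matrix_pow n by (metis diag_block_mat_zero)
qed

lemma complex_mat_nilpotent_if_trace_pow_zero: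
  fixes A :: "complex mat"
  assumes A: "A \<in> carrier_mat n n" and tr: "\<And>k. k \<ge> 1 \<Longrightarrow> mat_trace (A ^\<^sub>m k) = 0"
  shows "A ^\<^sub>m n = 0\<^sub>m n n"
proof -
  obtain as where "char_poly A = (\<Prod>a\<leftarrow>as. [:- a, 1:])" using char_poly_factorized[OF A] by blast
  then obtain n_as where "jordan_nf A n_as" using jordan_nf_exists[OF A] by blast
  then obtain P Q where sim: "similar_mat_wit A (jordan_matrix n_as) P Q"
    and pos: "0 \<notin> fst ` set n_as"
    unfolding jordan_nf_def similar_mat_def by blast
  note PQ = similar_mat_witD[OF carrier_matD(1)[OF A, symmetric] sim]
  have "\<forall>(m,a)\<in>set n_as. a = 0"
    using pos tr mat_trace_similar_pow[OF sim A]
    by (intro weighted_power_sums_zero_imp_zero) (force, simp add: mat_trace_jordan_matrix_pow)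
  moreover have "n = sum_list (map fst n_as)" using PQ(5) by auto
  ultimately have "jordan_matrix n_as ^\<^sub>m n = 0\<^sub>m n n" by (rule jordan_matrix_nilpotent)
  then show ?thesis
    unfolding similar_mat_wit_pow_id[OF sim] using PQ(6,7)
    by (metis left_mult_zero_mat right_mult_zero_mat)
qed

lemma mat_nilpotent_if_trace_pow_zero:
  fixes Z :: "real mat"
  assumes Z: "Z \<in> carrier_mat n n" and tr: "\<And>k. k \<ge> 1 \<Longrightarrow> mat_trace (Z ^\<^sub>m k) = 0"
  shows "Z ^\<^sub>m n = 0\<^sub>m n n"
proof -
  let ?A = "map_mat complex_of_real Z"
  have pow: "?A ^\<^sub>m k = map_mat complex_of_real (Z ^\<^sub>m k)" for k
    by (rule of_real_hom.mat_hom_pow[OF Z, symmetric])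
  have "mat_trace (?A ^\<^sub>m k) = complex_of_real (mat_trace (Z ^\<^sub>m k))" for k
    unfolding pow using Z by (simp add: mat_trace_def)
  then have "?A ^\<^sub>m n = 0\<^sub>m n n"
    using Z tr by (intro complex_mat_nilpotent_if_trace_pow_zero) auto
  then have "map_mat complex_of_real (Z ^\<^sub>m n) = map_mat complex_of_real (0\<^sub>m n n)"
    unfolding pow by (auto intro!: eq_matI)
  then show ?thesis by (rule of_real_hom.mat_hom_inj)
qed

section \<open>Skew-symmetric matrices\<close>

lemma sum_squares_eq_0_imp:
  fixes f :: "nat \<Rightarrow> real"
  assumes "(\<Sum>i<n. f i * f i) = 0" "i < n"
  shows "f i = 0"
  using assms by (subst (asm) sum_nonneg_eq_0_iff) auto

lemma sum_sum_squares_eq_0_imp: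
  fixes f :: "nat \<Rightarrow> nat \<Rightarrow> real"
  assumes "(\<Sum>i<n. \<Sum>j<m. f i j * f i j) = 0" "i < n" "j < m"
  shows "f i j = 0"
proof -
  have "(\<Sum>j<m. f i j * f i j) = 0"
    using assms(1,2) by (subst (asm) sum_nonneg_eq_0_iff) (auto intro: sum_nonneg)
  then show ?thesis using assms(3) by (rule sum_squares_eq_0_imp)
qed

lemma sum_skew_mult_transpose:
  fixes f :: "nat \<Rightarrow> nat \<Rightarrow> real"
  assumes "\<forall>i<n. \<forall>j<n. f j i = - f i j"
  shows "(\<Sum>i<n. \<Sum>j<n. f i j * f j i) = - (\<Sum>i<n. \<Sum>j<n. f i j * f i j)"
proof -
  have "(\<Sum>i<n. \<Sum>j<n. f i j * f j i) = (\<Sum>i<n. \<Sum>j<n. - (f i j * f i j))"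
    by (intro sum.cong refl) (metis assms lessThan_iff mult_minus_right)
  then show ?thesis by (simp add: sum_negf)
qed

lemma sum_skew_column:
  fixes f :: "nat \<Rightarrow> nat \<Rightarrow> real"
  assumes "\<forall>i<n. \<forall>j<n. f j i = - f i j" "l < n"
  shows "(\<Sum>i<n. f i l * w i) = - (\<Sum>i<n. f l i * w i)"
proof -
  have "(\<Sum>i<n. f i l * w i) = (\<Sum>i<n. - (f l i * w i))"
    by (intro sum.cong refl) (metis assms lessThan_iff mult_minus_left)
  then show ?thesis by (simp add: sum_negf)
qed

lemma skew_mat_trace_square_zero_imp_zero:
  fixes Z :: "real mat"
  assumes Z: "Z \<in> carrier_mat n n" and skew: "transpose_mat Z = - Z"
    and tr: "mat_trace (Z * Z) = 0"
  shows "Z = 0\<^sub>m n n"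
proof (rule eq_matI)
  have skew_entries: "\<forall>i<n. \<forall>j<n. Z $$ (j,i) = - Z $$ (i,j)"
  proof (intro allI impI)
    fix i j assume "i < n" "j < n"
    then show "Z $$ (j,i) = - Z $$ (i,j)"
      using Z arg_cong[OF skew, of "\<lambda>M. M $$ (i,j)"] by simp
  qed
  have "(\<Sum>i<n. \<Sum>j<n. Z $$ (i,j) * Z $$ (i,j)) = 0"
    using tr sum_skew_mult_transpose[OF skew_entries] mat_trace_mult[OF Z Z] by simp
  then show "Z $$ (i,j) = 0\<^sub>m n n $$ (i,j)" if "i < dim_row (0\<^sub>m n n)" "j < dim_col (0\<^sub>m n n)" for i j
    using sum_sum_squares_eq_0_imp[of "\<lambda>i j. Z $$ (i,j)" n n i j] that by simp
qed (use Z in auto)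

text \<open>Matrices of the Euclidean algebra are \<open>[[A, v], [0, 0]]\<close> with \<open>A\<close> skew of size \<open>k\<close>; they are
  handled through their entry functions, the last row (index \<open>k\<close>) being zero.\<close>

lemma euclidean_rotation_part_zero:
  fixes z :: "nat \<Rightarrow> nat \<Rightarrow> real"
  assumes last_row: "\<forall>j<Suc k. z k j = 0" and skew: "\<forall>i<k. \<forall>j<k. z j i = - z i j"
    and tr: "(\<Sum>i<Suc k. \<Sum>j<Suc k. z i j * z j i) = 0" and "i < k" "j < k"
  shows "z i j = 0"
proof -
  have "(\<Sum>i<Suc k. \<Sum>j<Suc k. z i j * z j i) = (\<Sum>i<k. \<Sum>j<k. z i j * z j i)"
    using last_row by (simp add: sum.distrib)
  then have "(\<Sum>i<k. \<Sum>j<k. z i j * z i j) = 0"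
    using tr sum_skew_mult_transpose[OF skew] by simp
  then show ?thesis using sum_sum_squares_eq_0_imp assms(4,5) by blast
qed

text \<open>With \<open>w\<close> the translation part of \<open>z = [x, y]\<close>, commuting gives \<open>A\<^sub>x w = A\<^sub>y w = 0\<close>, and
  \<open>|w|\<^sup>2 = \<langle>w, A\<^sub>x v\<^sub>y - A\<^sub>y v\<^sub>x\<rangle> = - \<langle>A\<^sub>x w, v\<^sub>y\<rangle> + \<langle>A\<^sub>y w, v\<^sub>x\<rangle> = 0\<close>.\<close>
lemma euclidean_translation_part_zero:
  fixes x y z :: "nat \<Rightarrow> nat \<Rightarrow> real"
  assumes row_x: "\<forall>j<Suc k. x k j = 0" and row_y: "\<forall>j<Suc k. y k j = 0"
    and row_z: "\<forall>j<Suc k. z k j = 0"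
    and skew_x: "\<forall>i<k. \<forall>j<k. x j i = - x i j" and skew_y: "\<forall>i<k. \<forall>j<k. y j i = - y i j"
    and rotation_z: "\<forall>i<k. \<forall>j<k. z i j = 0"
    and bracket: "\<forall>i<Suc k. \<forall>j<Suc k. z i j = (\<Sum>l<Suc k. x i l * y l j - y i l * x l j)"
    and comm_x: "\<forall>i<Suc k. \<forall>j<Suc k. (\<Sum>l<Suc k. x i l * z l j) = (\<Sum>l<Suc k. z i l * x l j)"
    and comm_y: "\<forall>i<Suc k. \<forall>j<Suc k. (\<Sum>l<Suc k. y i l * z l j) = (\<Sum>l<Suc k. z i l * y l j)"
    and "i < k"
  shows "z i k = 0"
proof -
  define w where "w i = z i k" for i
  have killed: "(\<Sum>l<k. a i l * w l) = 0"
    if row_a: "\<forall>j<Suc k. a k j = 0"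
      and comm_a: "\<forall>i<Suc k. \<forall>j<Suc k. (\<Sum>l<Suc k. a i l * z l j) = (\<Sum>l<Suc k. z i l * a l j)"
      and "i < k" for a i
  proof -
    have "(\<Sum>l<Suc k. a i l * z l k) = (\<Sum>l<Suc k. z i l * a l k)" using comm_a that by simp
    then show ?thesis using rotation_z row_a row_z \<open>i < k\<close> by (simp add: w_def)
  qed
  have w: "w i = (\<Sum>l<k. x i l * y l k - y i l * x l k)" if "i < k" for i
    using bracket that row_x row_y by (simp add: w_def)
  have "(\<Sum>i<k. w i * w i) = (\<Sum>i<k. \<Sum>l<k. w i * (x i l * y l k - y i l * x l k))"
    using w by (simp add: sum_distrib_left)
  also have "\<dots> = (\<Sum>l<k. \<Sum>i<k. w i * (x i l * y l k - y i l * x l k))"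
    by (rule sum.swap)
  also have "\<dots> = (\<Sum>l<k. y l k * (\<Sum>i<k. x i l * w i) - x l k * (\<Sum>i<k. y i l * w i))"
    by (simp add: sum_distrib_left sum_subtractf algebra_simps)
  also have "\<dots> = 0"
  proof (rule sum.neutral, intro ballI)
    fix l assume "l \<in> {..<k}"
    then show "y l k * (\<Sum>i<k. x i l * w i) - x l k * (\<Sum>i<k. y i l * w i) = 0"
      using sum_skew_column[OF skew_x] sum_skew_column[OF skew_y]
        killed[OF row_x comm_x] killed[OF row_y comm_y]
      by (simp add: mult.commute)
  qed
  finally have "(\<Sum>i<k. w i * w i) = 0" .
  then show ?thesis
    using sum_squares_eq_0_imp[of w k i] \<open>i < k\<close> by (simp add: w_def)
qed

section \<open>The Lorentz form on coordinate vectors\<close>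

text \<open>Vectors of \<open>\<real>\<^sup>1\<^sup>,\<^sup>k\<close> are modelled as functions \<open>nat \<Rightarrow> real\<close> and matrices by their entry
  functions; \<open>lin_app n a\<close> applies the \<open>n \<times> n\<close> block of \<open>a\<close> and returns a vector vanishing from
  index \<open>n\<close> on.\<close>

definition lorentz_sign :: "nat \<Rightarrow> real" where
  "lorentz_sign i = (if i = 0 then -1 else 1)"

definition lin_app :: "nat \<Rightarrow> (nat \<Rightarrow> nat \<Rightarrow> real) \<Rightarrow> (nat \<Rightarrow> real) \<Rightarrow> nat \<Rightarrow> real" where
  "lin_app n a u = (\<lambda>i. if i < n then (\<Sum>j<n. a i j * u j) else 0)"

definition lorentz_form :: "nat \<Rightarrow> (nat \<Rightarrow> real) \<Rightarrow> (nat \<Rightarrow> real) \<Rightarrow> real" where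
  "lorentz_form n u v = (\<Sum>i<n. lorentz_sign i * u i * v i)"

definition lorentz_skew :: "nat \<Rightarrow> (nat \<Rightarrow> nat \<Rightarrow> real) \<Rightarrow> bool" where
  "lorentz_skew n a \<longleftrightarrow> (\<forall>i<n. \<forall>j<n. lorentz_sign j * a j i = - (lorentz_sign i * a i j))"

definition supported_below :: "nat \<Rightarrow> (nat \<Rightarrow> real) \<Rightarrow> bool" where
  "supported_below n u \<longleftrightarrow> (\<forall>i\<ge>n. u i = 0)"

lemma lin_app_add: "lin_app n a (\<lambda>i. u i + v i) = (\<lambda>i. lin_app n a u i + lin_app n a v i)"
  unfolding lin_app_def by (auto simp: algebra_simps sum.distrib)

lemma lin_app_smult: "lin_app n a (\<lambda>i. c * u i) = (\<lambda>i. c * lin_app n a u i)"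
  unfolding lin_app_def by (auto simp: algebra_simps sum_distrib_left)

lemma lin_app_zero: "lin_app n a (\<lambda>i. 0) = (\<lambda>i. 0)"
  unfolding lin_app_def by auto

lemma supported_below_lin_app: "supported_below n (lin_app n a u)"
  unfolding lin_app_def supported_below_def by auto

lemma lin_app_lin_app:
  assumes "i < n"
  shows "lin_app n a (lin_app n b u) i = (\<Sum>j<n. (\<Sum>l<n. a i l * b l j) * u j)"
proof -
  have "lin_app n a (lin_app n b u) i = (\<Sum>l<n. \<Sum>j<n. a i l * b l j * u j)"
    using assms unfolding lin_app_def by (auto simp: sum_distrib_left mult.assoc intro!: sum.cong)
  also have "\<dots> = (\<Sum>j<n. \<Sum>l<n. a i l * b l j * u j)" by (rule sum.swap)
  finally show ?thesis by (simp add: sum_distrib_right)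
qed

lemma funpow_lin_app_zero: "(lin_app n a ^^ m) (\<lambda>i. 0) = (\<lambda>i. 0)"
  by (induction m) (simp_all add: lin_app_zero)

lemma supported_below_funpow_lin_app: "m \<ge> 1 \<Longrightarrow> supported_below n ((lin_app n a ^^ m) u)"
  by (cases m) (simp_all add: supported_below_lin_app)

lemma lorentz_form_sym: "lorentz_form n u v = lorentz_form n v u"
  unfolding lorentz_form_def by (simp add: algebra_simps)

lemma lorentz_form_add_right:
  "lorentz_form n w (\<lambda>i. u i + v i) = lorentz_form n w u + lorentz_form n w v"
  unfolding lorentz_form_def by (simp add: algebra_simps sum.distrib)

lemma lorentz_form_diff_left:
  "lorentz_form n (\<lambda>i. u i - v i) w = lorentz_form n u w - lorentz_form n v w"
  unfolding lorentz_form_def by (simp add: algebra_simps sum_subtractf)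

lemma lorentz_form_diff_right:
  "lorentz_form n w (\<lambda>i. u i - v i) = lorentz_form n w u - lorentz_form n w v"
  unfolding lorentz_form_def by (simp add: algebra_simps sum_subtractf)

lemma lorentz_form_smult_left: "lorentz_form n (\<lambda>i. c * u i) w = c * lorentz_form n u w"
  unfolding lorentz_form_def by (simp add: algebra_simps sum_distrib_left)

lemma lorentz_form_smult_right: "lorentz_form n w (\<lambda>i. c * u i) = c * lorentz_form n w u"
  unfolding lorentz_form_def by (simp add: algebra_simps sum_distrib_left)

lemma lorentz_form_zero_right [simp]: "lorentz_form n w (\<lambda>i. 0) = 0"
  unfolding lorentz_form_def by simp

lemma lorentz_form_lin_app_skew:
  assumes "lorentz_skew n a"
  shows "lorentz_form n (lin_app n a u) v = - lorentz_form n u (lin_app n a v)"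
proof -
  have "lorentz_form n (lin_app n a u) v = (\<Sum>i<n. \<Sum>j<n. lorentz_sign i * a i j * u j * v i)"
    unfolding lorentz_form_def lin_app_def
    by (simp add: sum_distrib_left sum_distrib_right algebra_simps)
  also have "\<dots> = (\<Sum>j<n. \<Sum>i<n. lorentz_sign i * a i j * u j * v i)" by (rule sum.swap)
  also have "\<dots> = (\<Sum>j<n. \<Sum>i<n. - (lorentz_sign j * a j i * u j * v i))"
  proof (intro sum.cong refl)
    fix j i assume "j \<in> {..<n}" "i \<in> {..<n}"
    then have "lorentz_sign j * a j i = - (lorentz_sign i * a i j)"
      using assms unfolding lorentz_skew_def by blast
    then show "lorentz_sign i * a i j * u j * v i = - (lorentz_sign j * a j i * u j * v i)"
      by (simp add: mult.assoc[symmetric])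
  qed
  also have "\<dots> = - lorentz_form n u (lin_app n a v)"
    unfolding lorentz_form_def lin_app_def by (simp add: sum_distrib_left sum_negf algebra_simps)
  finally show ?thesis .
qed

lemma lorentz_form_funpow_skew:
  assumes "lorentz_skew n a"
  shows "lorentz_form n ((lin_app n a ^^ m) u) v = (-1)^m * lorentz_form n u ((lin_app n a ^^ m) v)"
proof (induction m arbitrary: v)
  case (Suc m)
  have "lorentz_form n ((lin_app n a ^^ Suc m) u) v
      = - lorentz_form n ((lin_app n a ^^ m) u) (lin_app n a v)"
    by (simp add: lorentz_form_lin_app_skew[OF assms])
  also have "\<dots> = - ((-1)^m * lorentz_form n u ((lin_app n a ^^ m) (lin_app n a v)))"
    using Suc by simp
  also have "(lin_app n a ^^ m) (lin_app n a v) = (lin_app n a ^^ Suc m) v"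
    by (simp only: funpow_Suc_right o_apply)
  finally show ?case by simp
qed simp

lemma lorentz_form_self_zero_imp:
  assumes "w 0 = 0" and "lorentz_form n w w = 0" and "i < n"
  shows "w i = 0"
proof -
  have "lorentz_form n w w = (\<Sum>j<n. w j * w j)"
    unfolding lorentz_form_def using assms(1) by (intro sum.cong refl) (auto simp: lorentz_sign_def)
  then show ?thesis
    using assms(2,3) sum_squares_eq_0_imp[of w n i] by simp
qed

lemma isotropic_time_coord_nonzero:
  assumes "lorentz_form n q q = 0" "i < n" "q i \<noteq> 0"
  shows "q 0 \<noteq> 0"
  using lorentz_form_self_zero_imp[of q n i] assms by auto

text \<open>Lorentzian signature: a totally isotropic subspace has dimension at most one.\<close>
lemma isotropic_orthogonal_parallel:
  assumes pp: "lorentz_form n p p = 0" and qq: "lorentz_form n q q = 0"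
    and pq: "lorentz_form n p q = 0" and q0: "q 0 \<noteq> 0"
    and "supported_below n p" "supported_below n q"
  shows "p = (\<lambda>i. (p 0 / q 0) * q i)"
proof
  fix i
  define w where "w = (\<lambda>i. q 0 * p i - p 0 * q i)"
  have "lorentz_form n w w
      = q 0 * (q 0 * lorentz_form n p p - p 0 * lorentz_form n p q)
        - p 0 * (q 0 * lorentz_form n q p - p 0 * lorentz_form n q q)"
    unfolding w_def
    by (simp only: lorentz_form_diff_left lorentz_form_diff_right
        lorentz_form_smult_left lorentz_form_smult_right right_diff_distrib)
  then have ww: "lorentz_form n w w = 0" using pp qq pq lorentz_form_sym[of n q p] by simp
  have w0: "w 0 = 0" unfolding w_def by simp
  show "p i = (p 0 / q 0) * q i"
  proof (cases "i < n")
    case True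
    then have "w i = 0" by (rule lorentz_form_self_zero_imp[OF w0 ww])
    then show ?thesis using q0 unfolding w_def by (simp add: field_simps)
  next
    case False
    then show ?thesis using assms(5,6) unfolding supported_below_def by simp
  qed
qed

section \<open>Nilpotent operators skew for the Lorentz form\<close>

locale nilpotent_lorentz_skew =
  fixes n :: nat and z :: "nat \<Rightarrow> nat \<Rightarrow> real"
  assumes skew: "lorentz_skew n z"
    and nilpotent: "\<And>u. (lin_app n z ^^ n) u = (\<lambda>i. 0)"
    and nonzero: "\<exists>i<n. \<exists>j<n. z i j \<noteq> 0"
begin

abbreviation Z :: "(nat \<Rightarrow> real) \<Rightarrow> nat \<Rightarrow> real" where "Z \<equiv> lin_app n z"

definition height :: nat where
  "height = Max {m. \<exists>u. (Z ^^ m) u \<noteq> (\<lambda>i. 0)}"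

lemma nonvanishing_powers_bounded: "{m. \<exists>u. (Z ^^ m) u \<noteq> (\<lambda>i. 0)} \<subseteq> {..<n}"
proof
  fix m assume "m \<in> {m. \<exists>u. (Z ^^ m) u \<noteq> (\<lambda>i. 0)}"
  then obtain u where u: "(Z ^^ m) u \<noteq> (\<lambda>i. 0)" by blast
  show "m \<in> {..<n}"
  proof (rule ccontr)
    assume "m \<notin> {..<n}"
    then have "m - n + n = m" by simp
    moreover have "(Z ^^ (m - n + n)) u = (Z ^^ (m - n)) ((Z ^^ n) u)"
      by (simp only: funpow_add o_apply)
    ultimately have "(Z ^^ m) u = (\<lambda>i. 0)" by (simp add: nilpotent funpow_lin_app_zero)
    with u show False by contradiction
  qed
qed

lemma finite_nonvanishing_powers: "finite {m. \<exists>u. (Z ^^ m) u \<noteq> (\<lambda>i. 0)}"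
  using nonvanishing_powers_bounded by (rule finite_subset) simp

lemma Z_nonvanishing: "\<exists>u. Z u \<noteq> (\<lambda>i. 0)"
proof -
  obtain i j where ij: "i < n" "j < n" "z i j \<noteq> 0" using nonzero by blast
  then have "Z (\<lambda>l. if l = j then 1 else 0) i \<noteq> 0"
    by (simp add: lin_app_def if_distrib cong: if_cong)
  then show ?thesis by (intro exI[of _ "\<lambda>l. if l = j then 1 else 0"]) auto
qed

lemma one_nonvanishing_power: "1 \<in> {m. \<exists>u. (Z ^^ m) u \<noteq> (\<lambda>i. 0)}"
proof -
  obtain u where "Z u \<noteq> (\<lambda>i. 0)" using Z_nonvanishing by blast
  then have "(Z ^^ 1) u \<noteq> (\<lambda>i. 0)" by simp
  then show ?thesis by blast
qed

lemma height_ge_1: "1 \<le> height"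
  unfolding height_def using finite_nonvanishing_powers one_nonvanishing_power by (rule Max_ge)

lemma funpow_above_height:
  assumes "height < m"
  shows "(Z ^^ m) u = (\<lambda>i. 0)"
proof (rule ccontr)
  assume "(Z ^^ m) u \<noteq> (\<lambda>i. 0)"
  then have "m \<le> height"
    unfolding height_def by (intro Max_ge[OF finite_nonvanishing_powers]) blast
  with assms show False by simp
qed

lemma funpow_height_nonvanishing: "\<exists>u. (Z ^^ height) u \<noteq> (\<lambda>i. 0)"
proof -
  have "height \<in> {m. \<exists>u. (Z ^^ m) u \<noteq> (\<lambda>i. 0)}"
    unfolding height_def using one_nonvanishing_power
    by (intro Max_in[OF finite_nonvanishing_powers]) blast
  then show ?thesis by simp
qed

definition top_preimage :: "nat \<Rightarrow> real" where
  "top_preimage = (SOME u. (Z ^^ height) u \<noteq> (\<lambda>i. 0))"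

definition null_vec :: "nat \<Rightarrow> real" where
  "null_vec = (Z ^^ height) top_preimage"

lemma null_vec_nonzero: "null_vec \<noteq> (\<lambda>i. 0)"
  unfolding null_vec_def top_preimage_def by (rule someI_ex[OF funpow_height_nonvanishing])

lemma supported_null_vec: "supported_below n null_vec"
  unfolding null_vec_def using height_ge_1 by (rule supported_below_funpow_lin_app)

lemma lorentz_form_powers_above_height:
  assumes "height < a + b"
  shows "lorentz_form n ((Z ^^ a) u) ((Z ^^ b) v) = 0"
proof -
  have "lorentz_form n ((Z ^^ a) u) ((Z ^^ b) v) = (-1)^a * lorentz_form n u ((Z ^^ (a + b)) v)"
    by (simp add: lorentz_form_funpow_skew[OF skew] funpow_add)
  then show ?thesis using funpow_above_height[OF assms] by simp
qed

lemma null_vec_isotropic: "lorentz_form n null_vec null_vec = 0"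
  unfolding null_vec_def using height_ge_1 by (intro lorentz_form_powers_above_height) simp

lemma null_vec_time_coord: "null_vec 0 \<noteq> 0"
proof -
  obtain i where "null_vec i \<noteq> 0" using null_vec_nonzero by blast
  moreover have "i < n" using calculation supported_null_vec
    unfolding supported_below_def by (meson not_less)
  ultimately show ?thesis using isotropic_time_coord_nonzero null_vec_isotropic by blast
qed

lemma funpow_height_parallel:
  "(Z ^^ height) v = (\<lambda>i. ((Z ^^ height) v 0 / null_vec 0) * null_vec i)"
proof (rule isotropic_orthogonal_parallel)
  show "lorentz_form n ((Z ^^ height) v) ((Z ^^ height) v) = 0"
    "lorentz_form n ((Z ^^ height) v) null_vec = 0"
    using height_ge_1 unfolding null_vec_def by (simp_all add: lorentz_form_powers_above_height)
  show "supported_below n ((Z ^^ height) v)"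
    using height_ge_1 by (rule supported_below_funpow_lin_app)
qed (simp_all add: null_vec_isotropic null_vec_time_coord supported_null_vec)

lemma Z_null_vec: "Z null_vec = (\<lambda>i. 0)"
  using funpow_above_height[of "Suc height"] by (simp add: null_vec_def)

definition dual_vec :: "nat \<Rightarrow> real" where
  "dual_vec = (\<lambda>i. lorentz_sign i * null_vec i / (\<Sum>j<n. null_vec j * null_vec j))"

lemma lorentz_form_null_dual: "lorentz_form n null_vec dual_vec = 1"
proof -
  obtain i where i: "null_vec i \<noteq> 0" using null_vec_nonzero by blast
  then have "i < n" using supported_null_vec unfolding supported_below_def by (meson not_less)
  moreover have "0 < null_vec i * null_vec i" using i not_real_square_gt_zero by metis
  ultimately have "0 < (\<Sum>j<n. null_vec j * null_vec j)"
    by (intro sum_pos2[of _ i]) auto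
  moreover have "lorentz_form n null_vec dual_vec
      = (\<Sum>j<n. null_vec j * null_vec j) / (\<Sum>j<n. null_vec j * null_vec j)"
    unfolding lorentz_form_def dual_vec_def sum_divide_distrib
    by (intro sum.cong refl) (simp add: lorentz_sign_def)
  ultimately show ?thesis by simp
qed

lemma lorentz_form_dual_null: "lorentz_form n dual_vec null_vec = 1"
  unfolding lorentz_form_sym[of n dual_vec] by (rule lorentz_form_null_dual)

text \<open>If \<open>z (z^(h-1) u) = z^h u\<close> spans the null line, so does \<open>z^(h-1) u\<close> once \<open>h \<ge> 3\<close>, and
  then \<open>z^h u \<in> z (\<real> z^h u) = 0\<close>.\<close>
lemma height_le_2: "height \<le> 2"
proof (rule ccontr)
  assume "\<not> height \<le> 2"
  then obtain h where h: "height = Suc h" "2 \<le> h" by (cases height) auto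
  define v where "v = (Z ^^ h) top_preimage"
  have Zv: "Z v = null_vec" unfolding v_def null_vec_def h(1) by simp
  have null_vec_eq: "null_vec = (Z ^^ h) (Z top_preimage)"
    unfolding null_vec_def h(1) by (simp only: funpow_Suc_right o_apply)
  have "v = (\<lambda>i. (v 0 / null_vec 0) * null_vec i)"
  proof (rule isotropic_orthogonal_parallel)
    show "lorentz_form n v v = 0" "lorentz_form n v null_vec = 0"
      unfolding v_def null_vec_eq using h by (simp_all add: lorentz_form_powers_above_height)
    show "supported_below n v"
      unfolding v_def using h(2) by (intro supported_below_funpow_lin_app) simp
  qed (simp_all add: null_vec_isotropic null_vec_time_coord supported_null_vec)
  then have "Z v = Z (\<lambda>i. (v 0 / null_vec 0) * null_vec i)" by (rule arg_cong)
  then have "null_vec = (\<lambda>i. (v 0 / null_vec 0) * Z null_vec i)" by (simp only: Zv lin_app_smult)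
  then show False using Z_null_vec null_vec_nonzero by simp
qed

text \<open>For \<open>h = 1\<close>, \<open>z v = \<alpha>(v) n\<^sub>0\<close> and \<open>\<langle>z v, v\<rangle> = 0\<close> would make the product of the two
  nonzero linear forms \<open>\<alpha>\<close> and \<open>\<langle>n\<^sub>0, -\<rangle>\<close> vanish identically.\<close>
lemma height_neq_1: "height \<noteq> 1"
proof
  assume h: "height = 1"
  define \<alpha> where "\<alpha> v = (Z ^^ height) v 0 / null_vec 0" for v
  have \<alpha>_add: "\<alpha> (\<lambda>i. u i + v i) = \<alpha> u + \<alpha> v" for u v
    unfolding \<alpha>_def h by (simp add: lin_app_add add_divide_distrib)
  have vanish: "\<alpha> v * lorentz_form n null_vec v = 0" for v
  proof -
    have "lorentz_form n (Z v) v = - lorentz_form n v (Z v)"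
      by (rule lorentz_form_lin_app_skew[OF skew])
    then have "lorentz_form n (Z v) v = 0" using lorentz_form_sym[of n v "Z v"] by simp
    moreover have "(Z ^^ height) v = (\<lambda>i. \<alpha> v * null_vec i)"
      unfolding \<alpha>_def by (rule funpow_height_parallel)
    then have "Z v = (\<lambda>i. \<alpha> v * null_vec i)" using h by simp
    ultimately show ?thesis by (simp add: lorentz_form_smult_left)
  qed
  have "\<alpha> top_preimage = 1"
    unfolding \<alpha>_def null_vec_def[symmetric] using null_vec_time_coord by simp
  then have "lorentz_form n null_vec top_preimage = 0" using vanish[of top_preimage] by simp
  moreover have "\<alpha> dual_vec = 0" using vanish[of dual_vec] lorentz_form_null_dual by simp
  ultimately have "\<alpha> (\<lambda>i. top_preimage i + dual_vec i) = 1"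
    "lorentz_form n null_vec (\<lambda>i. top_preimage i + dual_vec i) = 1"
    using \<open>\<alpha> top_preimage = 1\<close> lorentz_form_null_dual by (simp_all add: \<alpha>_add lorentz_form_add_right)
  then show False using vanish[of "\<lambda>i. top_preimage i + dual_vec i"] by simp
qed

lemma height_eq_2: "height = 2"
  using height_ge_1 height_le_2 height_neq_1 by linarith

definition square_coeff :: real where
  "square_coeff = Z (Z dual_vec) 0 / null_vec 0"

lemma Z_Z_eq: "Z (Z v) = (\<lambda>i. square_coeff * lorentz_form n v null_vec * null_vec i)"
proof -
  have Z2: "Z (Z v) = (Z ^^ height) v" for v by (simp add: height_eq_2 numeral_2_eq_2)
  define \<alpha> where "\<alpha> v = Z (Z v) 0 / null_vec 0" for v
  have parallel: "Z (Z v) = (\<lambda>i. \<alpha> v * null_vec i)" for v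
    unfolding Z2 \<alpha>_def by (rule funpow_height_parallel)
  have "lorentz_form n (Z (Z v)) dual_vec = lorentz_form n v (Z (Z dual_vec))"
    using lorentz_form_funpow_skew[OF skew, of 2 v dual_vec] by (simp add: numeral_2_eq_2)
  then have "\<alpha> v = \<alpha> dual_vec * lorentz_form n v null_vec"
    unfolding parallel by (simp add: lorentz_form_smult_left lorentz_form_smult_right
        lorentz_form_null_dual)
  moreover have "square_coeff = \<alpha> dual_vec" unfolding square_coeff_def \<alpha>_def ..
  ultimately show ?thesis using parallel[of v] by simp
qed

lemma square_coeff_nonzero: "square_coeff \<noteq> 0"
proof
  assume "square_coeff = 0"
  then have "(Z ^^ height) top_preimage = (\<lambda>i. 0)"
    using Z_Z_eq by (simp add: height_eq_2 numeral_2_eq_2)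
  then show False using null_vec_nonzero null_vec_def by simp
qed

lemma lorentz_form_Z_dual_self: "lorentz_form n (Z dual_vec) (Z dual_vec) = - square_coeff"
  by (simp add: lorentz_form_lin_app_skew[OF skew] Z_Z_eq lorentz_form_smult_right
      lorentz_form_dual_null)

lemma Z_orthogonal_parallel:
  assumes "lorentz_form n v null_vec = 0"
  shows "Z v = (\<lambda>i. (Z v 0 / null_vec 0) * null_vec i)"
proof (rule isotropic_orthogonal_parallel)
  show "lorentz_form n (Z v) (Z v) = 0"
    using assms by (simp add: lorentz_form_lin_app_skew[OF skew] Z_Z_eq lorentz_form_smult_right)
  show "lorentz_form n (Z v) null_vec = 0"
    by (simp add: lorentz_form_lin_app_skew[OF skew] Z_null_vec)
qed (simp_all add: null_vec_isotropic null_vec_time_coord supported_null_vec supported_below_lin_app)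

text \<open>\<open>w\<close> commutes with \<open>z\<^sup>2 = square_coeff \<langle>-, n\<^sub>0\<rangle> n\<^sub>0\<close>, so \<open>w n\<^sub>0 = -a n\<^sub>0\<close>; skewness then
  gives \<open>a = \<langle>dual_vec, w n\<^sub>0\<rangle> = -a\<close>.\<close>
lemma commuting_skew_kills_null_vec:
  assumes w_skew: "lorentz_skew n w" and comm: "\<And>u. lin_app n w (Z u) = Z (lin_app n w u)"
  shows "lin_app n w null_vec = (\<lambda>i. 0)"
proof -
  let ?W = "lin_app n w"
  define a where "a = lorentz_form n dual_vec (?W null_vec)"
  have "?W (Z (Z dual_vec)) = Z (Z (?W dual_vec))" by (simp add: comm)
  then have eq: "(\<lambda>i. square_coeff * ?W null_vec i) = (\<lambda>i. square_coeff * (- a * null_vec i))"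
    unfolding Z_Z_eq a_def
    by (simp add: lin_app_smult lorentz_form_dual_null lorentz_form_lin_app_skew[OF w_skew]
        mult.assoc)
  have Wn: "?W null_vec = (\<lambda>i. - a * null_vec i)"
  proof
    fix i
    have "square_coeff * ?W null_vec i = square_coeff * (- a * null_vec i)"
      using fun_cong[OF eq, of i] by simp
    then show "?W null_vec i = - a * null_vec i"
      by (rule mult_left_cancel[OF square_coeff_nonzero, THEN iffD1])
  qed
  have "a = lorentz_form n dual_vec (\<lambda>i. - a * null_vec i)" using a_def unfolding Wn .
  then have "a = 0" unfolding lorentz_form_smult_right lorentz_form_dual_null by simp
  then show ?thesis using Wn by simp
qed

lemma lorentz_form_commuting_images:
  assumes "lorentz_skew n w" "\<And>u. lin_app n w (Z u) = Z (lin_app n w u)"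
    and "lorentz_skew n v" "\<And>u. lin_app n v (Z u) = Z (lin_app n v u)"
  shows "lorentz_form n (lin_app n w (Z dual_vec)) (lin_app n v dual_vec) = 0"
proof -
  define \<mu> where "\<mu> = Z (lin_app n w dual_vec) 0 / null_vec 0"
  have "lorentz_form n (lin_app n w dual_vec) null_vec = 0"
    using commuting_skew_kills_null_vec[OF assms(1,2)]
    by (simp add: lorentz_form_lin_app_skew[OF assms(1)])
  then have "Z (lin_app n w dual_vec) = (\<lambda>i. \<mu> * null_vec i)"
    unfolding \<mu>_def by (rule Z_orthogonal_parallel)
  moreover have "lorentz_form n null_vec (lin_app n v dual_vec) = 0"
    unfolding lorentz_form_sym[of n null_vec]
    by (simp add: lorentz_form_lin_app_skew[OF assms(3)] commuting_skew_kills_null_vec[OF assms(3,4)])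
  ultimately show ?thesis by (simp add: assms(2) lorentz_form_smult_left)
qed

end

text \<open>For \<open>u = dual_vec\<close> the vector \<open>z u = x y u - y x u\<close> has Lorentz norm \<open>-square_coeff \<noteq> 0\<close>,
  while skewness turns both terms of \<open>\<langle>z u, z u\<rangle>\<close> into \<open>lorentz_form_commuting_images\<close>.\<close>
lemma lorentz_heisenberg_center_zero:
  fixes x y z :: "nat \<Rightarrow> nat \<Rightarrow> real"
  assumes skew_x: "lorentz_skew n x" and skew_y: "lorentz_skew n y" and skew_z: "lorentz_skew n z"
    and bracket: "\<And>u. lin_app n z u = (\<lambda>i. lin_app n x (lin_app n y u) i - lin_app n y (lin_app n x u) i)"
    and comm_x: "\<And>u. lin_app n x (lin_app n z u) = lin_app n z (lin_app n x u)"
    and comm_y: "\<And>u. lin_app n y (lin_app n z u) = lin_app n z (lin_app n y u)"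
    and nilpotent: "\<And>u. (lin_app n z ^^ n) u = (\<lambda>i. 0)"
  shows "\<forall>i<n. \<forall>j<n. z i j = 0"
proof (rule ccontr)
  assume "\<not> ?thesis"
  then interpret nilpotent_lorentz_skew n z
    using skew_z nilpotent by unfold_locales auto
  let ?u = dual_vec and ?X = "lin_app n x" and ?Y = "lin_app n y"
  have "lorentz_form n (Z ?u) (Z ?u)
      = - lorentz_form n (?X (Z ?u)) (?Y ?u) + lorentz_form n (?Y (Z ?u)) (?X ?u)"
    by (subst (2) bracket) (simp add: lorentz_form_diff_right lorentz_form_lin_app_skew[OF skew_x]
        lorentz_form_lin_app_skew[OF skew_y])
  also have "\<dots> = 0"
    using lorentz_form_commuting_images[OF skew_x comm_x skew_y comm_y]
      lorentz_form_commuting_images[OF skew_y comm_y skew_x comm_x] by simp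
  finally show False using lorentz_form_Z_dual_self square_coeff_nonzero by simp
qed

section \<open>Heisenberg triples in a single factor\<close>

definition mat_entries :: "'a mat \<Rightarrow> nat \<Rightarrow> nat \<Rightarrow> 'a" where
  "mat_entries A i j = A $$ (i,j)"

lemma lin_app_mat_mult:
  assumes "A \<in> carrier_mat n n" "B \<in> carrier_mat n n"
  shows "lin_app n (mat_entries (A * B)) u = lin_app n (mat_entries A) (lin_app n (mat_entries B) u)"
proof
  fix i
  show "lin_app n (mat_entries (A * B)) u i = lin_app n (mat_entries A) (lin_app n (mat_entries B) u) i"
  proof (cases "i < n")
    case True
    have "lin_app n (mat_entries (A * B)) u i = (\<Sum>j<n. (A * B) $$ (i,j) * u j)"
      using True by (simp add: lin_app_def mat_entries_def)
    also have "\<dots> = (\<Sum>j<n. (\<Sum>l<n. A $$ (i,l) * B $$ (l,j)) * u j)"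
      by (intro sum.cong refl) (simp add: index_mult_mat_sum[OF assms True] del: index_mult_mat(1))
    finally show ?thesis unfolding lin_app_lin_app[OF True] by (simp add: mat_entries_def)
  qed (simp add: lin_app_def)
qed

lemma lin_app_mat_minus:
  assumes "A \<in> carrier_mat n n" "B \<in> carrier_mat n n"
  shows "lin_app n (mat_entries (A - B)) u
    = (\<lambda>i. lin_app n (mat_entries A) u i - lin_app n (mat_entries B) u i)"
  using assms by (auto simp: lin_app_def mat_entries_def left_diff_distrib sum_subtractf
      intro!: sum.cong)

lemma lin_app_mat_pow:
  assumes M: "M \<in> carrier_mat n n"
  shows "lin_app n (mat_entries (M ^\<^sub>m Suc m)) u = (lin_app n (mat_entries M) ^^ Suc m) u"
proof (induction m arbitrary: u)
  case (Suc m)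
  have "lin_app n (mat_entries (M ^\<^sub>m Suc (Suc m))) u
      = lin_app n (mat_entries (M ^\<^sub>m Suc m)) (lin_app n (mat_entries M) u)"
    by (simp only: pow_mat.simps(2)[of M "Suc m"] lin_app_mat_mult[OF pow_carrier_mat[OF M] M])
  then show ?case by (simp only: Suc funpow_Suc_right o_apply)
qed (use M in simp)

lemma lin_app_zero_mat: "lin_app n (mat_entries (0\<^sub>m n n)) u = (\<lambda>i. 0)"
  by (auto simp: lin_app_def mat_entries_def)

lemma lorentz_skew_hyperbolic:
  assumes "A \<in> lie_isom Hyp k"
  shows "lorentz_skew (k+1) (mat_entries A)"
  unfolding lorentz_skew_def
proof (intro allI impI)
  fix i j assume ij: "i < k+1" "j < k+1"
  let ?J = "lorentz_J (k+1)"
  have A: "A \<in> carrier_mat (k+1) (k+1)"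
    and eq: "transpose_mat A * ?J + ?J * A = 0\<^sub>m (k+1) (k+1)"
    using assms by auto
  have J: "?J \<in> carrier_mat (k+1) (k+1)" unfolding lorentz_J_def by auto
  have J_entry: "?J $$ (a,b) = (if a = b then lorentz_sign a else 0)" if "a < k+1" "b < k+1" for a b
    unfolding lorentz_J_def lorentz_sign_def using that by auto
  have "(transpose_mat A * ?J) $$ (i,j) = (\<Sum>l<k+1. transpose_mat A $$ (i,l) * ?J $$ (l,j))"
    by (rule index_mult_mat_sum) (use A J ij in auto)
  also have "\<dots> = (\<Sum>l<k+1. if l = j then A $$ (l,i) * lorentz_sign l else 0)"
    using A ij J_entry by (intro sum.cong) auto
  also have "\<dots> = A $$ (j,i) * lorentz_sign j" using ij(2) by simp
  finally have left: "(transpose_mat A * ?J) $$ (i,j) = A $$ (j,i) * lorentz_sign j" .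
  have "(?J * A) $$ (i,j) = (\<Sum>l<k+1. ?J $$ (i,l) * A $$ (l,j))"
    by (rule index_mult_mat_sum) (use A J ij in auto)
  also have "\<dots> = (\<Sum>l<k+1. if i = l then lorentz_sign i * A $$ (l,j) else 0)"
    using A ij J_entry by (intro sum.cong) auto
  also have "\<dots> = lorentz_sign i * A $$ (i,j)" using ij(1) by simp
  finally have right: "(?J * A) $$ (i,j) = lorentz_sign i * A $$ (i,j)" .
  have "(transpose_mat A * ?J + ?J * A) $$ (i,j) = 0" using eq ij by simp
  then show "lorentz_sign j * mat_entries A j i = - (lorentz_sign i * mat_entries A i j)"
    using A J ij left right by (simp add: mat_entries_def algebra_simps)
qed

lemma mat_pow_commute:
  assumes "X \<in> carrier_mat n n" "Z \<in> carrier_mat n n" "X * Z = Z * X"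
  shows "X * Z ^\<^sub>m j = Z ^\<^sub>m j * X"
proof (induction j)
  case (Suc j)
  have Zj: "Z ^\<^sub>m j \<in> carrier_mat n n" using assms by simp
  have "X * Z ^\<^sub>m Suc j = (Z ^\<^sub>m j * X) * Z"
    using assms Zj Suc by (simp add: assoc_mult_mat[of _ n n _ n _ n, symmetric])
  also have "\<dots> = Z ^\<^sub>m Suc j * X"
    using assms Zj by (simp add: assoc_mult_mat[of _ n n _ n _ n])
  finally show ?case .
qed (use assms in simp)

lemma commutator_trace_pow_zero:
  fixes X Y :: "'a::comm_ring_1 mat"
  assumes X: "X \<in> carrier_mat n n" and Y: "Y \<in> carrier_mat n n"
    and Z: "Z = X * Y - Y * X" and XZ: "X * Z = Z * X" and "m \<ge> 1"
  shows "mat_trace (Z ^\<^sub>m m) = 0"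
proof -
  obtain j where m: "m = Suc j" using \<open>m \<ge> 1\<close> by (cases m) auto
  have Zc: "Z \<in> carrier_mat n n" unfolding Z using X Y by (intro minus_carrier_mat) simp
  have "mat_trace ((X * Y - Y * X) * Z ^\<^sub>m j) = 0"
    by (rule mat_trace_commutator_mult[OF X Y]) (use Zc mat_pow_commute[OF X Zc XZ] in auto)
  then have "mat_trace (Z * Z ^\<^sub>m j) = 0" unfolding Z .
  then show ?thesis
    unfolding m using Zc by (simp add: mat_trace_mult_comm[of _ n n])
qed

lemma commutator_entries:
  fixes X Y :: "'a::comm_ring mat"
  assumes "X \<in> carrier_mat n n" "Y \<in> carrier_mat n n" "i < n" "j < n"
  shows "(X * Y - Y * X) $$ (i,j) = (\<Sum>l<n. X $$ (i,l) * Y $$ (l,j) - Y $$ (i,l) * X $$ (l,j))"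
  using assms by (simp add: index_mult_mat_sum sum_subtractf del: index_mult_mat(1))

lemma commute_entries:
  assumes "X \<in> carrier_mat n n" "Z \<in> carrier_mat n n" "X * Z = Z * X" "i < n" "j < n"
  shows "(\<Sum>l<n. X $$ (i,l) * Z $$ (l,j)) = (\<Sum>l<n. Z $$ (i,l) * X $$ (l,j))"
  using assms index_mult_mat_sum[of X n n Z n i j] index_mult_mat_sum[of Z n n X n i j] by simp

lemma lie_isom_carrier: "A \<in> lie_isom g k \<Longrightarrow> A \<in> carrier_mat (k+1) (k+1)"
  by (cases g) auto

lemma spherical_heisenberg_center_zero:
  assumes "X \<in> carrier_mat (k+1) (k+1)" "Y \<in> carrier_mat (k+1) (k+1)" "Z \<in> lie_isom Sph k"
    and "Z = X * Y - Y * X" "X * Z = Z * X"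
  shows "Z = 0\<^sub>m (k+1) (k+1)"
  using assms commutator_trace_pow_zero[OF assms(1,2,4,5), of 2]
  by (intro skew_mat_trace_square_zero_imp_zero) (auto simp: numeral_2_eq_2)

lemma euclidean_heisenberg_center_zero:
  assumes X: "X \<in> lie_isom Euc k" and Y: "Y \<in> lie_isom Euc k" and Z: "Z \<in> lie_isom Euc k"
    and bracket: "Z = X * Y - Y * X" and XZ: "X * Z = Z * X" and YZ: "Y * Z = Z * Y"
  shows "Z = 0\<^sub>m (k+1) (k+1)"
proof -
  have carrier: "X \<in> carrier_mat (Suc k) (Suc k)" "Y \<in> carrier_mat (Suc k) (Suc k)"
    "Z \<in> carrier_mat (Suc k) (Suc k)"
    using X Y Z by auto
  have rows: "\<forall>j<Suc k. A $$ (k,j) = 0" and skew: "\<forall>i<k. \<forall>j<k. A $$ (j,i) = - A $$ (i,j)"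
    if "A \<in> lie_isom Euc k" for A
    using that unfolding lie_isom.simps mem_Collect_eq Suc_eq_plus1 by blast+
  have "(\<Sum>i<Suc k. \<Sum>j<Suc k. Z $$ (i,j) * Z $$ (j,i)) = 0"
    using commutator_trace_pow_zero[of X "Suc k" Y Z 2] carrier bracket XZ
      mat_trace_mult[of Z "Suc k" "Suc k" Z]
    by (simp add: numeral_2_eq_2)
  then have rotation: "\<forall>i<k. \<forall>j<k. Z $$ (i,j) = 0"
    using euclidean_rotation_part_zero[of k "\<lambda>i j. Z $$ (i,j)", OF rows[OF Z] skew[OF Z]] by blast
  have bracket_entries:
    "\<forall>i<Suc k. \<forall>j<Suc k. Z $$ (i,j) = (\<Sum>l<Suc k. X $$ (i,l) * Y $$ (l,j) - Y $$ (i,l) * X $$ (l,j))"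
    unfolding bracket using commutator_entries[OF carrier(1,2)] by blast
  have commute:
    "\<forall>i<Suc k. \<forall>j<Suc k. (\<Sum>l<Suc k. A $$ (i,l) * Z $$ (l,j)) = (\<Sum>l<Suc k. Z $$ (i,l) * A $$ (l,j))"
    if "A \<in> carrier_mat (Suc k) (Suc k)" "A * Z = Z * A" for A
    using commute_entries[OF that(1) carrier(3) that(2)] by blast
  have translation: "\<forall>i<k. Z $$ (i,k) = 0"
    using euclidean_translation_part_zero[of k "\<lambda>i j. X $$ (i,j)" "\<lambda>i j. Y $$ (i,j)"
        "\<lambda>i j. Z $$ (i,j)", OF rows[OF X] rows[OF Y] rows[OF Z] skew[OF X] skew[OF Y] rotation
        bracket_entries commute[OF carrier(1) XZ] commute[OF carrier(2) YZ]]
    by blast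
  show ?thesis
  proof (rule eq_matI)
    fix i j assume "i < dim_row (0\<^sub>m (k+1) (k+1) :: real mat)" "j < dim_col (0\<^sub>m (k+1) (k+1) :: real mat)"
    then show "Z $$ (i,j) = 0\<^sub>m (k+1) (k+1) $$ (i,j)"
      using rows[OF Z] rotation translation by (auto simp: less_Suc_eq)
  qed (use carrier in auto)
qed

lemma hyperbolic_heisenberg_center_zero:
  assumes X: "X \<in> lie_isom Hyp k" and Y: "Y \<in> lie_isom Hyp k" and Z: "Z \<in> lie_isom Hyp k"
    and bracket: "Z = X * Y - Y * X" and XZ: "X * Z = Z * X" and YZ: "Y * Z = Z * Y"
  shows "Z = 0\<^sub>m (k+1) (k+1)"
proof -
  let ?n = "k+1"
  have carrier: "X \<in> carrier_mat ?n ?n" "Y \<in> carrier_mat ?n ?n" "Z \<in> carrier_mat ?n ?n"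
    using X Y Z by auto
  have nilpotent: "Z ^\<^sub>m ?n = 0\<^sub>m ?n ?n"
    using carrier commutator_trace_pow_zero[OF carrier(1,2) bracket XZ]
    by (intro mat_nilpotent_if_trace_pow_zero) auto
  have "\<forall>i<?n. \<forall>j<?n. mat_entries Z i j = 0"
  proof (rule lorentz_heisenberg_center_zero)
    show "lorentz_skew ?n (mat_entries X)" "lorentz_skew ?n (mat_entries Y)"
      "lorentz_skew ?n (mat_entries Z)"
      by (rule lorentz_skew_hyperbolic, fact)+
    show "lin_app ?n (mat_entries Z) u = (\<lambda>i. lin_app ?n (mat_entries X) (lin_app ?n (mat_entries Y) u) i
        - lin_app ?n (mat_entries Y) (lin_app ?n (mat_entries X) u) i)" for u
      unfolding bracket using carrier by (simp add: lin_app_mat_minus lin_app_mat_mult)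
    show "lin_app ?n (mat_entries X) (lin_app ?n (mat_entries Z) u)
        = lin_app ?n (mat_entries Z) (lin_app ?n (mat_entries X) u)" for u
      using carrier by (simp add: lin_app_mat_mult[symmetric] XZ)
    show "lin_app ?n (mat_entries Y) (lin_app ?n (mat_entries Z) u)
        = lin_app ?n (mat_entries Z) (lin_app ?n (mat_entries Y) u)" for u
      using carrier by (simp add: lin_app_mat_mult[symmetric] YZ)
    show "(lin_app ?n (mat_entries Z) ^^ ?n) u = (\<lambda>i. 0)" for u
      using lin_app_mat_pow[OF carrier(3), of k u] nilpotent by (simp add: lin_app_zero_mat)
  qed
  then show ?thesis using carrier by (intro eq_matI) (auto simp: mat_entries_def)
qed

lemma lie_isom_heisenberg_center_zero:
  assumes "X \<in> lie_isom g k" "Y \<in> lie_isom g k" "Z \<in> lie_isom g k"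
    and "Z = X * Y - Y * X" "X * Z = Z * X" "Y * Z = Z * Y"
  shows "Z = 0\<^sub>m (k+1) (k+1)"
proof (cases g)
  case Sph
  then show ?thesis
    using assms lie_isom_carrier spherical_heisenberg_center_zero by blast
next
  case Euc
  then show ?thesis using assms euclidean_heisenberg_center_zero by blast
next
  case Hyp
  then show ?thesis using assms hyperbolic_heisenberg_center_zero by blast
qed

section \<open>Nilpotent subalgebras of the product\<close>

lemma pspan_subset_subalgebra:
  assumes "is_subalgebra fs S" "G \<subseteq> S"
  shows "pspan fs G \<subseteq> S"
proof
  fix x assume "x \<in> pspan fs G"
  then show "x \<in> S"
    by (induction rule: pspan.induct) (use assms in \<open>auto simp: is_subalgebra_def\<close>)
qed

lemma pspan_pzero:
  assumes "G \<subseteq> {pzero fs}"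
  shows "pspan fs G = {pzero fs}"
proof
  have zero: "padd (pzero fs) (pzero fs) = pzero fs" "psmult c (pzero fs) = pzero fs" for c
    unfolding padd_def psmult_def pzero_def by (induction fs) auto
  show "pspan fs G \<subseteq> {pzero fs}"
  proof
    fix x assume "x \<in> pspan fs G"
    then show "x \<in> {pzero fs}" by (induction rule: pspan.induct) (use assms zero in auto)
  qed
qed (auto intro: pspan.zero)

lemma lcs_subset:
  assumes "is_subalgebra fs S"
  shows "lcs fs S m \<subseteq> S"
proof (induction m)
  case (Suc m)
  then have "{pbr x y | x y. x \<in> S \<and> y \<in> lcs fs S m} \<subseteq> S"
    using assms unfolding is_subalgebra_def by blast
  then show ?case using pspan_subset_subalgebra[OF assms] by simp
qed simp

text \<open>Take \<open>[a, b] \<noteq> 0\<close> among the generators of the last nonzero term of the lower central series.\<close>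
lemma nonabelian_nilpotent_central_bracket:
  assumes sub: "is_subalgebra fs S" and "is_nilpotent fs S" and "\<not> is_abelian fs S"
  obtains a b where "a \<in> S" "b \<in> S" "pbr a b \<noteq> pzero fs"
    and "\<And>s. s \<in> S \<Longrightarrow> pbr s (pbr a b) = pzero fs"
proof -
  define N where "N = (LEAST N. lcs fs S N = {pzero fs})"
  have N: "lcs fs S N = {pzero fs}"
    unfolding N_def using assms(2) unfolding is_nilpotent_def by (rule LeastI_ex)
  from assms(3) obtain x y where xy: "x \<in> S" "y \<in> S" "pbr x y \<noteq> pzero fs"
    unfolding is_abelian_def by blast
  have "pbr x y \<in> lcs fs S 1" using xy by (auto intro: pspan.gen)
  then have "N \<noteq> 0" "N \<noteq> 1" using N xy sub by (auto simp: is_subalgebra_def)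
  then obtain m where m: "N = Suc (Suc m)" by (metis One_nat_def not0_implies_Suc)
  have "Suc m < N" using m by simp
  then have "lcs fs S (Suc m) \<noteq> {pzero fs}" unfolding N_def by (rule not_less_Least)
  then obtain a b where ab: "a \<in> S" "b \<in> lcs fs S m" "pbr a b \<noteq> pzero fs"
    using pspan_pzero[of "{pbr a b | a b. a \<in> S \<and> b \<in> lcs fs S m}" fs] by auto
  have "pbr a b \<in> lcs fs S (Suc m)" using ab by (auto intro: pspan.gen)
  then have central: "pbr s (pbr a b) \<in> lcs fs S N" if "s \<in> S" for s
    using that m by (auto intro: pspan.gen)
  show ?thesis
  proof (rule that)
    show "a \<in> S" "pbr a b \<noteq> pzero fs" using ab by auto
    show "b \<in> S" using ab(2) lcs_subset[OF sub] by blast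
    show "pbr s (pbr a b) = pzero fs" if "s \<in> S" for s using central[OF that] N by simp
  qed
qed

lemma nth_pbr: "i < length xs \<Longrightarrow> i < length ys \<Longrightarrow> pbr xs ys ! i = xs ! i * ys ! i - ys ! i * xs ! i"
  unfolding pbr_def by simp

lemma nth_pzero: "i < length fs \<Longrightarrow> pzero fs ! i = 0\<^sub>m (snd (fs ! i) + 1) (snd (fs ! i) + 1)"
  unfolding pzero_def by (simp add: case_prod_beta)

lemma mat_eq_if_minus_eq_zero:
  fixes A B :: "'a::ab_group_add mat"
  assumes "A \<in> carrier_mat n n" "B \<in> carrier_mat n n" "A - B = 0\<^sub>m n n"
  shows "A = B"
proof (rule eq_matI)
  fix i j assume ij: "i < dim_row B" "j < dim_col B"
  then have "(A - B) $$ (i,j) = A $$ (i,j) - B $$ (i,j)" by (rule index_minus_mat)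
  moreover have "(A - B) $$ (i,j) = 0" using assms(2,3) ij by simp
  ultimately show "A $$ (i,j) = B $$ (i,j)" by simp
qed (use assms in auto)

lemma nth_commute_if_pbr_eq_pzero:
  assumes "x \<in> prod_carrier fs" "y \<in> prod_carrier fs" "pbr x y = pzero fs" "i < length fs"
  shows "x ! i * y ! i = y ! i * x ! i"
proof (rule mat_eq_if_minus_eq_zero)
  let ?k = "snd (fs ! i)"
  have "x ! i \<in> carrier_mat (?k+1) (?k+1)" "y ! i \<in> carrier_mat (?k+1) (?k+1)"
    using assms(1,2,4) lie_isom_carrier unfolding prod_carrier_def by blast+
  then show "x ! i * y ! i \<in> carrier_mat (?k+1) (?k+1)" "y ! i * x ! i \<in> carrier_mat (?k+1) (?k+1)"
    by auto
  show "x ! i * y ! i - y ! i * x ! i = 0\<^sub>m (?k+1) (?k+1)"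
    using arg_cong[OF assms(3), of "\<lambda>l. l ! i"] assms(1,2,4)
    unfolding prod_carrier_def by (simp add: nth_pbr nth_pzero)
qed

theorem lemma6p31:
  fixes fs :: "(geom \<times> nat) list" and S :: "real mat list set"
  assumes "is_subalgebra fs S" and "is_nilpotent fs S"
  shows "is_abelian fs S"
proof (rule ccontr)
  assume "\<not> is_abelian fs S"
  then obtain a b where ab: "a \<in> S" "b \<in> S" and nonzero: "pbr a b \<noteq> pzero fs"
    and central: "\<And>s. s \<in> S \<Longrightarrow> pbr s (pbr a b) = pzero fs"
    using nonabelian_nilpotent_central_bracket assms by blast
  define z where "z = pbr a b"
  have in_prod: "a \<in> prod_carrier fs" "b \<in> prod_carrier fs" "z \<in> prod_carrier fs"
    using ab assms(1) unfolding z_def is_subalgebra_def by auto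
  then obtain i where i: "i < length fs" "z ! i \<noteq> pzero fs ! i"
    using nonzero nth_equalityI[of z "pzero fs"] unfolding z_def[symmetric] prod_carrier_def pzero_def
    by auto
  have "z ! i = a ! i * b ! i - b ! i * a ! i"
    using in_prod i(1) unfolding z_def prod_carrier_def by (simp add: nth_pbr)
  moreover have "a ! i * z ! i = z ! i * a ! i" "b ! i * z ! i = z ! i * b ! i"
    using central ab in_prod i(1) unfolding z_def[symmetric]
    by (blast intro: nth_commute_if_pbr_eq_pzero)+
  ultimately have "z ! i = 0\<^sub>m (snd (fs ! i) + 1) (snd (fs ! i) + 1)"
    using in_prod i(1) unfolding prod_carrier_def by (blast intro: lie_isom_heisenberg_center_zero)
  with i show False by (simp add: nth_pzero)
qed

end
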